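(* Let $q=2^n$, $a,b\in\mathbb{F}_{q^2}^{*}$, and $\xi(a,b)=\sum_{\lambda\in U}(-1)^{\mathrm{Tr}_1^{2n}\left(\frac{a}{\lambda+b}\right)}$. Then $$\xi(a,b)=\begin{cases}1+(-1)^{\mathrm{Tr}_1^n(a\overline{a})}q, & \text{if } b\in U \text{ and } \mathrm{Tr}_n^{2n}(a\overline{b})=0,\\ 1, & \text{if } b\in U \text{ and } \mathrm{Tr}_n^{2n}(a\overline{b})\neq0,\\ \left(1-\mathcal{K}_n\!\left(\frac{a\overline{a}}{1+b^2\overline{b}^2}\right)\right)(-1)^{\mathrm{Tr}_1^{2n}\left(\frac{\overline{a}b}{1+b\overline{b}}\right)}, & \text{if } b\in\mathbb{F}_{q^2}^{*}\setminus U.\end{cases}$$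
   Context: For $k\mid m$, $\mathrm{Tr}_k^{m}(x)=x+x^{2^k}+\cdots+x^{2^{(m/k-1)k}}$ is the trace from $\mathbb{F}_{2^m}$ to $\mathbb{F}_{2^k}$. For $x\in\mathbb{F}_{q^2}$ write $\overline{x}=x^{q}$; $U=\{\eta\in\mathbb{F}_{q^2}:\eta^{q+1}=1\}$. Division by zero uses the convention $\frac10=0$ (so the term $\lambda=b$, if $b\in U$, contributes $1$). The binary Kloosterman sum is $\mathcal{K}_n(a)=\sum_{x\in\mathbb{F}_{2^n}}(-1)^{\mathrm{Tr}_1^n(\frac1x+ax)}$. *)

theory Defs
  imports Main
begin

definition tr :: "nat \<Rightarrow> nat \<Rightarrow> 'a::field \<Rightarrow> 'a" where
  "tr k m x = (\<Sum>i<m div k. x ^ (2 ^ (i * k)))"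

text \<open>(-1)^t for t in F_2 (embedded as 0 or 1 in the field).\<close>
definition sgn1 :: "'a::field \<Rightarrow> int" where
  "sgn1 t = (if t = 0 then 1 else -1)"

definition conj2 :: "nat \<Rightarrow> 'a::field \<Rightarrow> 'a" where
  "conj2 n x = x ^ (2 ^ n)"

definition subF :: "nat \<Rightarrow> 'a::field set" where
  "subF n = {x. x ^ (2 ^ n) = x}"

definition unitU :: "nat \<Rightarrow> 'a::field set" where
  "unitU n = {eta. eta ^ (2 ^ n + 1) = 1}"

text \<open>Binary Kloosterman sum over F_{2^n} (inverse 0 = 0 as convention 1/0 = 0).\<close>
definition kloosterman :: "nat \<Rightarrow> 'a::field \<Rightarrow> int" where
  "kloosterman n a = (\<Sum>x\<in>subF n. sgn1 (tr 1 n (inverse x + a * x)))"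

text \<open>xi(a,b) = sum over lambda in U of (-1)^{Tr_1^{2n}(a/(lambda+b))}, with a/0 = 0.\<close>
definition xi :: "nat \<Rightarrow> 'a::field \<Rightarrow> 'a \<Rightarrow> int" where
  "xi n a b = (\<Sum>l\<in>unitU n. sgn1 (tr 1 (2 * n) (a / (l + b))))"

end

(* If b is in U, the map l |-> b / (l + b) sends U - {b} onto the affine line z + conj z = 1,
   a coset of F_q, and turns a / (l + b) into (a conj b) z.  Hence xi(a,b) - 1 is an additive
   character sum over F_q: it vanishes unless Tr_n^2n(a conj b) = 0, and then equals
   (-1)^Tr(a conj a) q.

   If b is not in U, the Moebius map l |-> (1 + conj b l) / (l + b) permutes U and
   a / (l + b) = c eta + c conj b with c = a / (1 + b conj b), so xi(a,b) is a sign times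
   S(c) = sum over eta in U of (-1)^Tr(c eta).  The elements u = c eta are those of norm
   A = c conj c; group them by their trace t = u + conj u.  Over t = 0 lies only the square
   root of A.  Over t <> 0 lies {u, conj u} or nothing, and something only if
   Tr_1^n(A / t^2) = 1, because A / t^2 = y^2 + y with y = u / t.  Both sets of such t have
   q/2 elements (the first because U has q + 1 elements), so the condition is also sufficient,
   and the substitution x = 1 / t^2 turns the resulting sum into 1 - K_n(A). *)

theory Submission
  imports Defs "HOL-Number_Theory.Residues" "HOL-Computational_Algebra.Polynomial"
begin

lemma card_eq_mult_card_image_if_fibres:
  assumes "finite A" and "\<And>y. y \<in> f ` A \<Longrightarrow> card {x\<in>A. f x = y} = k"
  shows "card A = k * card (f ` A)"
proof -
  have "card A = (\<Sum>y\<in>f ` A. card {x\<in>A. f x = y})"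
    using sum.group[OF assms(1) finite_imageI[OF assms(1)] subset_refl, of "\<lambda>_. 1::nat" f]
    by simp
  also have "\<dots> = k * card (f ` A)"
    using assms(2) by simp
  finally show ?thesis .
qed

lemma card_eq_card_kernel_mult_card_image:
  fixes f :: "'a::ab_group_add \<Rightarrow> 'b::ab_group_add"
  assumes "finite A" and diff_closed: "\<And>x y. x \<in> A \<Longrightarrow> y \<in> A \<Longrightarrow> x - y \<in> A"
    and f_diff: "\<And>x y. x \<in> A \<Longrightarrow> y \<in> A \<Longrightarrow> f (x - y) = f x - f y"
  shows "card A = card {x\<in>A. f x = 0} * card (f ` A)"
proof (rule card_eq_mult_card_image_if_fibres[OF assms(1)])
  fix y assume "y \<in> f ` A"
  then obtain x0 where x0: "x0 \<in> A" "y = f x0"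
    by blast
  have "{x\<in>A. f x = y} = (\<lambda>k. x0 + k) ` {x\<in>A. f x = 0}"
  proof (intro equalityI subsetI)
    fix x assume "x \<in> {x\<in>A. f x = y}"
    hence "x - x0 \<in> {x\<in>A. f x = 0}" and "x = x0 + (x - x0)"
      using x0 diff_closed f_diff by auto
    thus "x \<in> (\<lambda>k. x0 + k) ` {x\<in>A. f x = 0}"
      by blast
  next
    fix x assume "x \<in> (\<lambda>k. x0 + k) ` {x\<in>A. f x = 0}"
    then obtain k where k: "k \<in> A" "f k = 0" and x: "x = x0 + k"
      by blast
    have "0 \<in> A" and "f 0 = 0"
      using diff_closed[OF k(1) k(1)] f_diff[OF k(1) k(1)] by simp_all
    hence "- k \<in> A" and "f (- k) = 0"
      using diff_closed[of 0 k] f_diff[of 0 k] k by simp_all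
    hence "x0 - (- k) \<in> A" and "f (x0 - (- k)) = f x0"
      using diff_closed[of x0 "- k"] f_diff[of x0 "- k"] x0(1) by simp_all
    thus "x \<in> {x\<in>A. f x = y}"
      using x x0(2) by simp
  qed
  also have "card \<dots> = card {x\<in>A. f x = 0}"
    by (rule card_image) (simp add: inj_on_def)
  finally show "card {x\<in>A. f x = y} = card {x\<in>A. f x = 0}" .
qed

lemma card_le_of_roots:
  fixes p :: "'a::idom poly"
  assumes "coeff p d \<noteq> 0" and "degree p \<le> d" and "\<And>x. x \<in> S \<Longrightarrow> poly p x = 0"
  shows "card S \<le> d"
proof -
  have "p \<noteq> 0"
    using assms(1) by auto
  hence "card S \<le> card {x. poly p x = 0}"
    using assms(3) by (intro card_mono poly_roots_finite) auto
  also have "\<dots> \<le> degree p"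
    using \<open>p \<noteq> 0\<close> by (rule card_poly_roots_bound)
  finally show ?thesis
    using assms(2) by simp
qed

section \<open>Finite fields and characteristic two\<close>

(* The library version finite_field_power_card_eq_same needs the sort finite_field. *)
lemma power_card_UNIV_eq_self:
  fixes x :: "'a::{field,finite}"
  shows "x ^ card (UNIV :: 'a set) = x"
proof (cases "x = 0")
  case True
  thus ?thesis using finite_UNIV_card_ge_0[where 'a = 'a] by simp
next
  case False
  let ?S = "UNIV - {0::'a}"
  have "(\<Prod>y\<in>?S. x * y) = (\<Prod>y\<in>?S. y)"
    by (rule prod.reindex_bij_witness[of _ "\<lambda>y. y / x" "\<lambda>y. x * y"]) (use False in auto)
  hence "x ^ card ?S = 1"
    by (simp add: prod.distrib)
  moreover have "card (UNIV :: 'a set) = Suc (card ?S)"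
    using finite_UNIV_card_ge_0[where 'a = 'a] by (simp add: card_Diff_singleton)
  ultimately show ?thesis
    by (simp only: power_Suc mult_1_right)
qed

lemma CHAR_eq_2_if_card_eq_power_2:
  assumes "card (UNIV :: 'a::{field,finite} set) = 2 ^ k"
  shows "CHAR('a) = 2"
proof -
  have "prime CHAR('a)"
    by (intro prime_CHAR_semidom finite_imp_CHAR_pos) simp
  moreover have "CHAR('a) dvd 2 ^ k"
    using CHAR_dvd_CARD[where 'a = 'a] assms by simp
  ultimately show ?thesis
    by (metis prime_dvd_power two_is_prime_nat primes_dvd_imp_eq)
qed

lemma add_self_CHAR_2:
  assumes "CHAR('a::ring_1) = 2"
  shows "x + x = (0::'a)"
  using uminus_CHAR_2[OF assms, of x] by (metis add.right_inverse)

lemma add_eq_0_iff_eq_CHAR_2: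
  assumes "CHAR('a::ring_1) = 2"
  shows "x + y = (0::'a) \<longleftrightarrow> x = y"
  using minus_CHAR_2[OF assms, of x y] by (metis eq_iff_diff_eq_0)

lemma power_two_power_add_CHAR_2:
  assumes "CHAR('a::comm_semiring_1) = 2"
  shows "(x + y :: 'a) ^ 2 ^ k = x ^ 2 ^ k + y ^ 2 ^ k"
  by (rule freshmans_dream') (simp_all add: assms)

lemma sgn1_0 [simp]: "sgn1 0 = 1"
  by (simp add: sgn1_def)

lemma sgn1_add_CHAR_2:
  fixes u v :: "'a::field"
  assumes "CHAR('a) = 2" and "u = 0 \<or> u = 1" and "v = 0 \<or> v = 1"
  shows "sgn1 (u + v) = sgn1 u * sgn1 v"
  using assms add_self_CHAR_2[OF assms(1), of 1] by (auto simp: sgn1_def)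

lemma tr_1_eq: "tr 1 m x = (\<Sum>i<m. x ^ 2 ^ i)"
  by (simp add: tr_def)

lemma tr_1_add_CHAR_2:
  assumes "CHAR('a::field) = 2"
  shows "tr 1 m (x + y :: 'a) = tr 1 m x + tr 1 m y"
  unfolding tr_1_eq by (simp add: power_two_power_add_CHAR_2[OF assms] sum.distrib)

lemma power2_tr_1_CHAR_2:
  assumes "CHAR('a::field) = 2"
  shows "(tr 1 m x) ^ 2 = (\<Sum>i<m. (x :: 'a) ^ 2 ^ Suc i)"
proof -
  have "(tr 1 m x) ^ 2 = (\<Sum>i<m. (x ^ 2 ^ i) ^ 2)"
    unfolding tr_1_eq by (rule freshmans_dream_sum) (simp_all add: assms)
  thus ?thesis
    by (simp add: mult.commute flip: power_mult)
qed

lemma tr_1_power2_CHAR_2: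
  assumes "CHAR('a::field) = 2"
  shows "tr 1 m (x ^ 2 :: 'a) = (tr 1 m x) ^ 2"
  using power2_tr_1_CHAR_2[OF assms, of m x] unfolding tr_1_eq by (simp flip: power_mult)

lemma power2_tr_1_add_CHAR_2:
  assumes "CHAR('a::field) = 2"
  shows "(tr 1 m x) ^ 2 + x = tr 1 m x + (x :: 'a) ^ 2 ^ m"
proof -
  have "(tr 1 m x) ^ 2 + x = (\<Sum>i<Suc m. x ^ 2 ^ i)"
    unfolding power2_tr_1_CHAR_2[OF assms] sum.lessThan_Suc_shift by (simp add: add.commute)
  also have "\<dots> = tr 1 m x + x ^ 2 ^ m"
    unfolding tr_1_eq by simp
  finally show ?thesis .
qed

section \<open>Conjugation, F_q and U in the field of order q^2\<close>

locale gf_q_square =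
  fixes n :: nat and field_type :: "'a::{field,finite} itself"
  assumes card_UNIV: "card (UNIV :: 'a set) = 2 ^ (2 * n)"
begin

abbreviation q :: nat where "q \<equiv> 2 ^ n"
abbreviation bar :: "'a \<Rightarrow> 'a" where "bar \<equiv> conj2 n"
abbreviation Fq :: "'a set" where "Fq \<equiv> subF n"
abbreviation U :: "'a set" where "U \<equiv> unitU n"

lemma CHAR_eq_2: "CHAR('a) = 2"
  using card_UNIV by (rule CHAR_eq_2_if_card_eq_power_2)

lemma n_pos: "n > 0"
  using CHAR_dvd_CARD[where 'a = 'a] by (simp add: CHAR_eq_2 card_UNIV)

lemma q_ge_2: "q \<ge> 2"
  using n_pos by (cases n) auto

lemma card_UNIV_eq_q_q: "card (UNIV :: 'a set) = q * q"
  by (simp add: card_UNIV mult_2 power_add)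

lemma two_eq_0 [simp]: "(2::'a) = 0"
  using of_nat_CHAR[where 'a = 'a] by (simp add: CHAR_eq_2)

lemma add_self [simp]: "x + x = (0::'a)"
  by (rule add_self_CHAR_2[OF CHAR_eq_2])

lemma add_self_left [simp]: "x + (x + y) = (y::'a)"
  by (simp flip: add.assoc)

lemma add_eq_iff_eq_add: "x + y = z \<longleftrightarrow> y = x + (z::'a)"
  by (metis add_self_left)

lemma add_eq_0_iff_eq: "x + y = (0::'a) \<longleftrightarrow> x = y"
  by (rule add_eq_0_iff_eq_CHAR_2[OF CHAR_eq_2])

lemma diff_eq_add: "x - y = (x + y :: 'a)"
  by (rule minus_CHAR_2[OF CHAR_eq_2])

lemma bar_bar [simp]: "bar (bar x) = x"
proof -
  have "bar (bar x) = x ^ card (UNIV :: 'a set)"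
    by (simp add: conj2_def card_UNIV_eq_q_q power_mult)
  thus ?thesis
    by (simp only: power_card_UNIV_eq_self)
qed

lemma bar_add [simp]: "bar (x + y) = bar x + bar y"
  by (simp add: conj2_def power_two_power_add_CHAR_2[OF CHAR_eq_2])

lemma bar_mult [simp]: "bar (x * y) = bar x * bar y"
  by (simp add: conj2_def power_mult_distrib)

lemma bar_divide [simp]: "bar (x / y) = bar x / bar y"
  by (simp add: conj2_def power_divide)

lemma bar_power: "bar (x ^ k) = bar x ^ k"
  by (simp add: conj2_def flip: power_mult mult.commute)

lemma bar_0 [simp]: "bar 0 = 0" and bar_1 [simp]: "bar 1 = 1"
  and bar_eq_0_iff [simp]: "bar x = 0 \<longleftrightarrow> x = 0"
  by (simp_all add: conj2_def)

lemma subF_iff: "x \<in> Fq \<longleftrightarrow> bar x = x"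
  by (simp add: subF_def conj2_def)

lemma unitU_iff: "x \<in> U \<longleftrightarrow> x * bar x = 1"
  by (simp add: unitU_def conj2_def mult.commute)

lemma subF_0: "(0::'a) \<in> Fq" and subF_1: "(1::'a) \<in> Fq"
  by (simp_all add: subF_iff)

lemma subF_add: "(x::'a) \<in> Fq \<Longrightarrow> y \<in> Fq \<Longrightarrow> x + y \<in> Fq"
  and subF_mult: "(x::'a) \<in> Fq \<Longrightarrow> y \<in> Fq \<Longrightarrow> x * y \<in> Fq"
  and subF_divide: "(x::'a) \<in> Fq \<Longrightarrow> y \<in> Fq \<Longrightarrow> x / y \<in> Fq"
  and subF_power: "(x::'a) \<in> Fq \<Longrightarrow> x ^ k \<in> Fq"
  by (simp_all add: subF_iff bar_power)

lemma trace_in_subF: "x + bar x \<in> Fq"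
  by (simp add: subF_iff add.commute)

lemma norm_in_subF: "x * bar x \<in> Fq"
  by (simp add: subF_iff mult.commute)

lemma unitU_nonzero: "(x::'a) \<in> U \<Longrightarrow> x \<noteq> 0"
  by (auto simp: unitU_iff)

lemma bar_unitU: "x \<in> U \<Longrightarrow> bar x = inverse x"
  by (metis unitU_iff inverse_unique)

lemma card_subF_le: "card Fq \<le> q"
proof (rule card_le_of_roots[where p = "monom (1::'a) q - monom 1 1"])
  show "coeff (monom (1::'a) q - monom 1 1) q \<noteq> 0" and "degree (monom (1::'a) q - monom 1 1) \<le> q"
    using q_ge_2 by (auto intro!: degree_diff_le simp: degree_monom_eq)
qed (simp add: poly_monom subF_def)

lemma card_subF: "card Fq = q"
  and range_trace: "range (\<lambda>x. x + bar x) = Fq"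
proof -
  let ?tr = "\<lambda>x. x + bar x"
  have "card (UNIV :: 'a set) = card {x\<in>UNIV. ?tr x = 0} * card (range ?tr)"
    by (rule card_eq_card_kernel_mult_card_image) (simp_all add: diff_eq_add add_ac)
  also have "{x\<in>UNIV. ?tr x = 0} = Fq"
    by (auto simp: subF_iff add_eq_0_iff_eq)
  finally have q_q: "q * q = card Fq * card (range ?tr)"
    by (simp add: card_UNIV_eq_q_q)
  have range_sub: "range ?tr \<subseteq> Fq"
    using trace_in_subF by auto
  hence "card (range ?tr) \<le> card Fq"
    by (intro card_mono) simp_all
  hence "q * q \<le> card Fq * card Fq"
    by (simp add: q_q)
  hence "q \<le> card Fq"
    by (rule power2_le_imp_le[unfolded power2_eq_square]) simp
  thus card_subF: "card Fq = q"
    using card_subF_le by simp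
  have "card (range ?tr) = q"
    using q_q q_ge_2 by (simp add: card_subF)
  thus "range ?tr = Fq"
    using range_sub by (intro card_subset_eq) (simp_all add: card_subF)
qed

lemma card_unitU_le: "card U \<le> q + 1"
proof (rule card_le_of_roots[where p = "monom (1::'a) (q + 1) - 1"])
  show "coeff (monom (1::'a) (q + 1) - 1) (q + 1) \<noteq> 0"
    and "degree (monom (1::'a) (q + 1) - 1) \<le> q + 1"
    by (auto intro!: degree_diff_le simp: degree_monom_eq)
qed (simp add: poly_monom unitU_def)

lemma image_mult_unitU:
  assumes "c \<noteq> 0"
  shows "(\<lambda>\<eta>. c * \<eta>) ` U = {u. u * bar u = c * bar c}"
proof (intro equalityI subsetI)
  fix u assume "u \<in> {u. u * bar u = c * bar c}"
  hence "u / c \<in> U"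
    using assms by (simp add: unitU_iff)
  thus "u \<in> (\<lambda>\<eta>. c * \<eta>) ` U"
    using assms by (intro image_eqI[of _ _ "u / c"]) simp_all
qed (auto simp: unitU_iff mult_ac)

lemma card_unitU: "card U = q + 1"
proof -
  let ?nonzero = "UNIV - {0::'a}" and ?norm = "\<lambda>x::'a. x * bar x"
  have "(q + 1) * (q - 1) = q * q - 1"
    by (cases q) simp_all
  also have "\<dots> = card ?nonzero"
    by (simp add: card_UNIV_eq_q_q card_Diff_singleton)
  also have "\<dots> = card U * card (?norm ` ?nonzero)"
  proof (rule card_eq_mult_card_image_if_fibres)
    fix y assume "y \<in> ?norm ` ?nonzero"
    then obtain x0 where x0: "x0 \<noteq> 0" "y = ?norm x0"
      by blast
    have "{x\<in>?nonzero. ?norm x = y} = (\<lambda>u. x0 * u) ` U"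
      using image_mult_unitU[OF x0(1)] x0 by auto
    also have "card \<dots> = card U"
      using x0 by (intro card_image) (simp add: inj_on_def)
    finally show "card {x\<in>?nonzero. ?norm x = y} = card U" .
  qed simp
  also have "\<dots> \<le> card U * (q - 1)"
  proof (rule mult_le_mono2)
    have "?norm ` ?nonzero \<subseteq> Fq - {0}"
      using norm_in_subF by auto
    hence "card (?norm ` ?nonzero) \<le> card (Fq - {0})"
      by (intro card_mono) simp_all
    thus "card (?norm ` ?nonzero) \<le> q - 1"
      by (simp add: card_subF subF_0)
  qed
  finally have "q + 1 \<le> card U"
    by (rule mult_right_le_imp_le) (use q_ge_2 in simp)
  thus ?thesis
    using card_unitU_le by simp
qed

section \<open>The absolute trace of F_q\<close>

(* A constant for tr 1 n: inside tr 1 n the simplifier rewrites 1 to Suc 0 (One_nat_def is a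
   simp rule), after which no lemma stated for tr 1 n applies. *)
definition Tr :: "'a \<Rightarrow> 'a" where "Tr = tr 1 n"

lemma Tr_eq: "Tr x = (\<Sum>i<n. x ^ 2 ^ i)"
  unfolding Tr_def by (rule tr_1_eq)

lemma Tr_add: "Tr (x + y) = Tr x + Tr y"
  unfolding Tr_def by (rule tr_1_add_CHAR_2[OF CHAR_eq_2])

lemma Tr_0 [simp]: "Tr 0 = 0"
  using Tr_add[of 0 0] by simp

lemma Tr_subF:
  assumes "x \<in> Fq"
  shows "Tr x = 0 \<or> Tr x = 1"
proof -
  have "(Tr x) ^ 2 + x = Tr x + x"
    using power2_tr_1_add_CHAR_2[OF CHAR_eq_2, of n x] assms by (simp add: Tr_def subF_def)
  hence "Tr x * (Tr x - 1) = 0"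
    by (simp add: power2_eq_square algebra_simps)
  thus ?thesis
    by simp
qed

lemma Tr_power2: "Tr (x ^ 2) = (Tr x) ^ 2"
  unfolding Tr_def by (rule tr_1_power2_CHAR_2[OF CHAR_eq_2])

lemma Tr_power2_subF:
  assumes "x \<in> Fq"
  shows "Tr (x ^ 2) = Tr x"
  using Tr_subF[OF assms] by (auto simp: Tr_power2)

lemma Tr_power2_add: "Tr (y ^ 2 + y) = bar y + y"
proof -
  have "Tr (y ^ 2 + y) = ((Tr y) ^ 2 + y) + (Tr y + y)"
    by (simp add: Tr_add Tr_power2 add_ac)
  also have "\<dots> = bar y + y"
    unfolding Tr_def power2_tr_1_add_CHAR_2[OF CHAR_eq_2] by (simp add: conj2_def add_ac)
  finally show ?thesis .
qed

lemma tr_1_2n_eq: "tr 1 (2 * n) x = Tr (x + bar x)"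
proof -
  have "tr 1 (2 * n) x = (\<Sum>i\<in>{0..<n + n}. x ^ 2 ^ i)"
    unfolding tr_1_eq by (simp add: mult_2 atLeast0LessThan)
  also have "\<dots> = (\<Sum>i\<in>{0..<n}. x ^ 2 ^ i) + (\<Sum>i\<in>{n..<n + n}. x ^ 2 ^ i)"
    by (rule sum.atLeastLessThan_concat[symmetric]) simp_all
  also have "(\<Sum>i\<in>{n..<n + n}. x ^ 2 ^ i) = (\<Sum>i<n. bar x ^ 2 ^ i)"
    using sum.shift_bounds_nat_ivl[of "\<lambda>i. x ^ 2 ^ i" 0 n n]
    by (simp add: conj2_def atLeast0LessThan power_add mult.commute flip: power_mult)
  finally show ?thesis
    unfolding Tr_add by (simp add: Tr_eq atLeast0LessThan)
qed

lemma tr_n_2n_eq: "tr n (2 * n) x = x + bar x"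
  using n_pos by (simp add: tr_def conj2_def numeral_2_eq_2)

lemma tr_1_2n_bar: "tr 1 (2 * n) (bar x) = tr 1 (2 * n) x"
  unfolding tr_1_2n_eq by (simp add: add.commute)

lemma sgn1_Tr_add:
  assumes "x \<in> Fq" and "y \<in> Fq"
  shows "sgn1 (Tr (x + y)) = sgn1 (Tr x) * sgn1 (Tr y)"
  unfolding Tr_add using assms by (intro sgn1_add_CHAR_2 CHAR_eq_2 Tr_subF)

lemma sgn1_tr_1_2n_add:
  "sgn1 (tr 1 (2 * n) (x + y)) = sgn1 (tr 1 (2 * n) x) * sgn1 (tr 1 (2 * n) (y :: 'a))"
  unfolding tr_1_2n_eq using sgn1_Tr_add[OF trace_in_subF trace_in_subF, of x y]
  by (simp add: add_ac)

lemma card_Tr_eq_0_le: "card {x\<in>Fq. Tr x = 0} \<le> 2 ^ (n - 1)"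
proof (rule card_le_of_roots[where p = "\<Sum>i<n. monom (1::'a) (2 ^ i)"])
  have "coeff (\<Sum>i<n. monom (1::'a) (2 ^ i)) (2 ^ (n - 1)) = (\<Sum>i<n. if i = n - 1 then 1 else 0)"
    unfolding coeff_sum by (intro sum.cong) auto
  thus "coeff (\<Sum>i<n. monom (1::'a) (2 ^ i)) (2 ^ (n - 1)) \<noteq> 0"
    using n_pos by simp
  show "degree (\<Sum>i<n. monom (1::'a) (2 ^ i)) \<le> 2 ^ (n - 1)"
    by (intro degree_sum_le) (auto simp: degree_monom_eq)
qed (simp add: poly_sum poly_monom Tr_eq)

lemma card_Tr_eq_0: "2 * card {x\<in>Fq. Tr x = 0} = q"
proof (rule antisym)
  have "card (Tr ` Fq) \<le> card {0, 1 :: 'a}"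
    using Tr_subF by (intro card_mono) auto
  hence "card {x\<in>Fq. Tr x = 0} * card (Tr ` Fq) \<le> card {x\<in>Fq. Tr x = 0} * 2"
    by (intro mult_le_mono2) simp
  moreover have "card Fq = card {x\<in>Fq. Tr x = 0} * card (Tr ` Fq)"
    by (rule card_eq_card_kernel_mult_card_image) (simp_all add: diff_eq_add subF_add Tr_add)
  ultimately show "q \<le> 2 * card {x\<in>Fq. Tr x = 0}"
    by (simp add: card_subF)
  have "q = 2 * 2 ^ (n - 1)"
    using n_pos by (cases n) simp_all
  thus "2 * card {x\<in>Fq. Tr x = 0} \<le> q"
    using card_Tr_eq_0_le by simp
qed

lemma card_Tr_eq_1: "2 * card {x\<in>Fq. Tr x = 1} = q"
proof -
  have "{x\<in>Fq. Tr x = 1} = Fq - {x\<in>Fq. Tr x = 0}"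
    using Tr_subF by auto
  thus ?thesis
    using card_Tr_eq_0 by (simp add: card_Diff_subset card_subF)
qed

lemma sum_sgn1_Tr: "(\<Sum>x\<in>Fq. sgn1 (Tr x)) = 0"
proof -
  have "Fq \<inter> - {x. Tr x = 0} = {x\<in>Fq. Tr x = 1}"
    using Tr_subF by auto
  hence "(\<Sum>x\<in>Fq. sgn1 (Tr x)) = int (card {x\<in>Fq. Tr x = 0}) - int (card {x\<in>Fq. Tr x = 1})"
    unfolding sgn1_def by (simp add: sum.If_cases Int_def conj_commute)
  thus ?thesis
    using card_Tr_eq_0 card_Tr_eq_1 by simp
qed

lemma sum_sgn1_Tr_mult:
  assumes "d \<in> Fq"
  shows "(\<Sum>t\<in>Fq. sgn1 (Tr (d * t))) = (if d = 0 then int q else 0)"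
proof (cases "d = 0")
  case True
  thus ?thesis by (simp add: card_subF)
next
  case False
  have "bij_betw (\<lambda>t. d * t) Fq Fq"
    using False assms by (intro bij_betw_imageI endo_inj_surj) (auto simp: inj_on_def subF_mult)
  hence "(\<Sum>t\<in>Fq. sgn1 (Tr (d * t))) = (\<Sum>x\<in>Fq. sgn1 (Tr x))"
    by (rule sum.reindex_bij_betw)
  thus ?thesis
    using False by (simp add: sum_sgn1_Tr)
qed

section \<open>The case b in U\<close>

lemma line_eq_coset:
  assumes "z0 + bar z0 = 1"
  shows "{z. z + bar z = 1} = (\<lambda>t. z0 + t) ` Fq"
proof (intro equalityI subsetI)
  fix z assume "z \<in> {z. z + bar z = 1}"
  hence "bar z = z + 1"
    by (simp add: add_eq_iff_eq_add)
  moreover have "bar z0 = z0 + 1"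
    using assms by (simp add: add_eq_iff_eq_add)
  ultimately have "z + z0 \<in> Fq"
    by (simp add: subF_iff add_ac)
  moreover have "z = z0 + (z + z0)"
    by (simp add: add_ac)
  ultimately show "z \<in> (\<lambda>t. z0 + t) ` Fq"
    by blast
qed (use assms in \<open>auto simp: subF_iff add_ac\<close>)

lemma sum_sgn1_tr_line:
  "(\<Sum>z | z + bar z = 1. sgn1 (tr 1 (2 * n) (e * z))) = (if e + bar e = 0 then sgn1 (Tr e) * q else 0)"
proof -
  have "1 \<in> range (\<lambda>x. x + bar x)"
    using range_trace subF_1 by simp
  then obtain z0 where z0: "z0 + bar z0 = 1"
    by auto
  have "(\<Sum>z | z + bar z = 1. sgn1 (tr 1 (2 * n) (e * z))) = (\<Sum>t\<in>Fq. sgn1 (Tr (e * (z0 + t) + bar (e * (z0 + t)))))"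
    unfolding line_eq_coset[OF z0] tr_1_2n_eq by (rule sum.reindex_cong[where l = "\<lambda>t. z0 + t"]) (simp_all add: inj_on_def)
  also have "\<dots> = sgn1 (Tr (e * z0 + bar (e * z0))) * (\<Sum>t\<in>Fq. sgn1 (Tr ((e + bar e) * t)))"
    unfolding sum_distrib_left
  proof (rule sum.cong)
    fix t assume "t \<in> Fq"
    hence "e * (z0 + t) + bar (e * (z0 + t)) = (e * z0 + bar (e * z0)) + (e + bar e) * t"
      by (simp add: subF_iff algebra_simps)
    thus "sgn1 (Tr (e * (z0 + t) + bar (e * (z0 + t))))
        = sgn1 (Tr (e * z0 + bar (e * z0))) * sgn1 (Tr ((e + bar e) * t))"
      using sgn1_Tr_add[OF trace_in_subF subF_mult[OF trace_in_subF \<open>t \<in> Fq\<close>], of "e * z0" e]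
      by (simp only:)
  qed simp
  also have "\<dots> = (if e + bar e = 0 then sgn1 (Tr e) * q else 0)"
  proof (cases "e + bar e = 0")
    case True
    hence "e * z0 + bar (e * z0) = e"
      using z0 by (simp add: add_eq_0_iff_eq flip: distrib_left)
    thus ?thesis
      using True by (simp add: sgn1_def card_subF)
  qed (simp add: sum_sgn1_Tr_mult trace_in_subF)
  finally show ?thesis .
qed

lemma divide_add_in_line:
  assumes "b \<in> U" and "l \<in> U" and "l \<noteq> b"
  shows "b / (l + b) + bar (b / (l + b)) = 1"
proof -
  have "b \<noteq> 0" "l \<noteq> 0" "l + b \<noteq> 0"
    using assms by (simp_all add: unitU_nonzero add_eq_0_iff_eq)
  have "bar (b / (l + b)) = inverse b / (inverse l + inverse b)"
    using assms(1,2) by (simp add: bar_unitU)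
  also have "\<dots> = l / (l + b)"
    using \<open>b \<noteq> 0\<close> \<open>l \<noteq> 0\<close> \<open>l + b \<noteq> 0\<close> by (simp add: field_simps)
  finally show ?thesis
    using \<open>l + b \<noteq> 0\<close> by (simp add: add.commute flip: add_divide_distrib)
qed

lemma line_divide_add_in_unitU:
  assumes "b \<in> U" and "z + bar z = 1"
  shows "b / z + b \<in> U"
proof -
  have "z \<noteq> 0" and "bar z \<noteq> 0" and bar_z: "bar z = z + 1"
    using assms(2) by (auto simp: add_eq_iff_eq_add)
  have "(b / z + b) * bar (b / z + b) = (b * bar b) * ((z + 1) * (bar z + 1)) / (z * bar z)"
    using \<open>z \<noteq> 0\<close> \<open>bar z \<noteq> 0\<close> by (simp add: field_simps del: bar_eq_0_iff)
  also have "(z + 1) * (bar z + 1) = z * bar z"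
    by (simp add: bar_z add_ac mult.commute)
  also have "(b * bar b) * (z * bar z) / (z * bar z) = 1"
    using \<open>z \<noteq> 0\<close> assms(1) by (simp add: unitU_iff)
  finally show ?thesis
    by (simp add: unitU_iff)
qed

lemma bij_betw_unitU_line:
  assumes "b \<in> U"
  shows "bij_betw (\<lambda>l. b / (l + b)) (U - {b}) {z. z + bar z = 1}"
proof (rule bij_betw_byWitness[where f' = "\<lambda>z. b / z + b"])
  have "b \<noteq> 0"
    using assms by (rule unitU_nonzero)
  thus "\<forall>l\<in>U - {b}. b / (b / (l + b)) + b = l" and "\<forall>z\<in>{z. z + bar z = 1}. b / (b / z + b + b) = z"
    by (auto simp: add_eq_0_iff_eq)
  show "(\<lambda>l. b / (l + b)) ` (U - {b}) \<subseteq> {z. z + bar z = 1}"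
    using divide_add_in_line[OF assms] by auto
  show "(\<lambda>z. b / z + b) ` {z. z + bar z = 1} \<subseteq> U - {b}"
    using line_divide_add_in_unitU[OF assms] \<open>b \<noteq> 0\<close> by auto
qed

lemma Tr_norm_eq_Tr_mult_bar:
  assumes "b \<in> U" and "tr n (2 * n) (a * bar b) = 0"
  shows "Tr (a * bar a) = Tr (a * bar b)"
proof -
  let ?e = "a * bar b"
  have "bar ?e = ?e"
    using assms(2) by (simp add: tr_n_2n_eq add_eq_0_iff_eq)
  hence "Tr ?e = Tr (?e * bar ?e)"
    by (simp add: Tr_power2_subF subF_iff flip: power2_eq_square)
  also have "?e * bar ?e = a * bar a * (b * bar b)"
    by (simp add: mult_ac)
  finally show ?thesis
    using assms(1) by (simp add: unitU_iff)
qed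

lemma xi_unitU:
  assumes "b \<in> U"
  shows "xi n a b = 1 + (if tr n (2 * n) (a * bar b) = 0 then sgn1 (Tr (a * bar a)) * q else 0)"
proof -
  define e where "e = a * bar b"
  have b_bar_b: "b * bar b = 1"
    using assms by (simp add: unitU_iff)
  have "xi n a b = sgn1 (tr 1 (2 * n) (a / (b + b))) + (\<Sum>l\<in>U - {b}. sgn1 (tr 1 (2 * n) (a / (l + b))))"
    unfolding xi_def by (rule sum.remove) (simp_all add: assms)
  also have "sgn1 (tr 1 (2 * n) (a / (b + b))) = 1"
    by (simp add: sgn1_def tr_def power_0_left)
  also have "(\<Sum>l\<in>U - {b}. sgn1 (tr 1 (2 * n) (a / (l + b))))
      = (\<Sum>l\<in>U - {b}. sgn1 (tr 1 (2 * n) (e * (b / (l + b)))))"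
  proof (intro sum.cong refl arg_cong[where f = "\<lambda>x. sgn1 (tr 1 (2 * n) x)"])
    fix l
    have "e * (b / (l + b)) = a * (b * bar b) / (l + b)"
      by (simp add: e_def mult_ac)
    also have "\<dots> = a / (l + b)"
      by (simp only: b_bar_b mult_1_right)
    finally show "a / (l + b) = e * (b / (l + b))"
      by (rule sym)
  qed
  also have "\<dots> = (\<Sum>z | z + bar z = 1. sgn1 (tr 1 (2 * n) (e * z)))"
    by (rule sum.reindex_bij_betw[OF bij_betw_unitU_line[OF assms]])
  also have "\<dots> = (if e + bar e = 0 then sgn1 (Tr e) * q else 0)"
    by (rule sum_sgn1_tr_line)
  also have "\<dots> = (if tr n (2 * n) (a * bar b) = 0 then sgn1 (Tr (a * bar a)) * q else 0)"
    using Tr_norm_eq_Tr_mult_bar[OF assms] by (simp add: e_def tr_n_2n_eq)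
  finally show ?thesis .
qed

section \<open>Norm-trace fibres and the Kloosterman sum\<close>

lemma power2_eq_power2_iff: "x ^ 2 = y ^ 2 \<longleftrightarrow> x = (y::'a)"
  using power_two_power_add_CHAR_2[OF CHAR_eq_2, of x y 1] by (auto simp: add_eq_0_iff_eq)

lemma bij_betw_power2_subF: "bij_betw (\<lambda>x. x ^ 2) Fq Fq"
  by (intro bij_betw_imageI endo_inj_surj) (auto simp: inj_on_def power2_eq_power2_iff subF_power)

lemma bij_betw_divide_power2:
  assumes "A \<in> Fq" and "A \<noteq> 0"
  shows "bij_betw (\<lambda>t. A / t ^ 2) (Fq - {0}) (Fq - {0})"
proof -
  have "inj_on (\<lambda>t. A / t ^ 2) (Fq - {0})"
    using assms(2) by (auto simp: inj_on_def power2_eq_power2_iff)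
  thus ?thesis
    using assms by (intro bij_betw_imageI endo_inj_surj) (auto simp: subF_divide subF_power)
qed

definition norm_trace_fibre :: "'a \<Rightarrow> 'a \<Rightarrow> 'a set" where
  "norm_trace_fibre A t = {u. u * bar u = A \<and> u + bar u = t}"

lemma norm_trace_fibre_eq: "norm_trace_fibre (u * bar u) (u + bar u) = {u, bar u}"
proof (intro equalityI subsetI)
  fix v assume "v \<in> norm_trace_fibre (u * bar u) (u + bar u)"
  hence "(v + u) * (v + bar u) = v * v + (v + bar v) * v + v * bar v"
    by (simp add: norm_trace_fibre_def algebra_simps)
  also have "\<dots> = 0"
    by (simp add: algebra_simps)
  finally show "v \<in> {u, bar u}"
    by (auto simp: add_eq_0_iff_eq)
qed (auto simp: norm_trace_fibre_def mult.commute add.commute)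

lemma Tr_norm_divide_trace_power2:
  assumes "u + bar u \<noteq> 0"
  shows "Tr (u * bar u / (u + bar u) ^ 2) = 1"
proof -
  define t where "t = u + bar u"
  have "t \<noteq> 0" and bar_t: "bar t = t"
    using assms by (simp_all add: t_def add.commute)
  have "u * bar u = u ^ 2 + t * u"
    by (simp add: t_def algebra_simps power2_eq_square)
  also have "\<dots> = ((u / t) ^ 2 + u / t) * t ^ 2"
    using \<open>t \<noteq> 0\<close> by (simp add: field_simps power2_eq_square)
  finally have "Tr (u * bar u / t ^ 2) = bar (u / t) + u / t"
    using \<open>t \<noteq> 0\<close> by (simp add: Tr_power2_add)
  also have "\<dots> = (u + bar u) / t"
    by (simp add: bar_t add.commute flip: add_divide_distrib)
  also have "\<dots> = 1"
    using \<open>t \<noteq> 0\<close> by (simp add: t_def)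
  finally show ?thesis
    unfolding t_def .
qed

lemma card_norm_trace_fibre_0:
  assumes "A \<in> Fq"
  shows "card (norm_trace_fibre A 0) = 1"
proof -
  have "A \<in> (\<lambda>x. x ^ 2) ` Fq"
    using bij_betw_imp_surj_on[OF bij_betw_power2_subF] assms by simp
  then obtain r where r: "r \<in> Fq" "r ^ 2 = A"
    by blast
  have "norm_trace_fibre A 0 = {r}"
  proof (intro equalityI subsetI)
    fix u assume "u \<in> norm_trace_fibre A 0"
    hence "u * bar u = A" and "bar u = u"
      by (auto simp: norm_trace_fibre_def add_eq_0_iff_eq)
    hence "u ^ 2 = r ^ 2"
      using r by (simp add: power2_eq_square)
    thus "u \<in> {r}"
      by (simp add: power2_eq_power2_iff)
  qed (use r in \<open>simp add: norm_trace_fibre_def subF_iff power2_eq_square\<close>)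
  thus ?thesis
    by simp
qed

lemma sum_group_trace:
  fixes h :: "'a \<Rightarrow> 'b::comm_semiring_1"
  shows "(\<Sum>u\<in>C. h (u + bar u)) = (\<Sum>t\<in>Fq. of_nat (card {u\<in>C. u + bar u = t}) * h t)"
proof -
  have "(\<Sum>u\<in>C. h (u + bar u)) = (\<Sum>t\<in>Fq. \<Sum>u\<in>{u\<in>C. u + bar u = t}. h (u + bar u))"
    by (rule sum.group[symmetric]) (auto simp: trace_in_subF)
  also have "\<dots> = (\<Sum>t\<in>Fq. of_nat (card {u\<in>C. u + bar u = t}) * h t)"
    by (intro sum.cong refl) simp
  finally show ?thesis .
qed

lemma card_norm_fibre:
  assumes "c \<noteq> 0"
  shows "card {u. u * bar u = c * bar c} = q + 1"
  using assms by (simp flip: image_mult_unitU add: card_image inj_on_def card_unitU)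

lemma card_norm_trace_fibre_nonzero:
  assumes "u * bar u = A" and "u + bar u = t" and "t \<noteq> 0"
  shows "card (norm_trace_fibre A t) = 2" and "Tr (A / t ^ 2) = 1"
proof -
  have "u \<noteq> bar u"
    using assms(2,3) by auto
  thus "card (norm_trace_fibre A t) = 2"
    using norm_trace_fibre_eq[of u] assms(1,2) by simp
  show "Tr (A / t ^ 2) = 1"
    using Tr_norm_divide_trace_power2[of u] assms by simp
qed

lemma two_mult_card_traces_of_norm_fibre:
  assumes "c \<noteq> 0"
  shows "2 * card {t\<in>Fq - {0}. norm_trace_fibre (c * bar c) t \<noteq> {}} = q"
proof -
  let ?A = "c * bar c"
  let ?P = "{t\<in>Fq - {0}. norm_trace_fibre ?A t \<noteq> {}}"
  have "q + 1 = (\<Sum>t\<in>Fq. card (norm_trace_fibre ?A t))"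
    using card_norm_fibre[OF assms] sum_group_trace[of "\<lambda>_. 1::nat" "{u. u * bar u = ?A}"]
    by (simp add: norm_trace_fibre_def conj_commute)
  also have "\<dots> = card (norm_trace_fibre ?A 0) + (\<Sum>t\<in>Fq - {0}. card (norm_trace_fibre ?A t))"
    by (rule sum.remove) (simp_all add: subF_0)
  also have "(\<Sum>t\<in>Fq - {0}. card (norm_trace_fibre ?A t)) = (\<Sum>t\<in>?P. 2)"
  proof (rule sum.mono_neutral_cong_right)
    fix t assume "t \<in> ?P"
    then obtain u where "u \<in> norm_trace_fibre ?A t" and "t \<noteq> 0"
      by blast
    thus "card (norm_trace_fibre ?A t) = 2"
      using card_norm_trace_fibre_nonzero(1)[of u ?A t] by (simp add: norm_trace_fibre_def)
  qed auto
  finally show ?thesis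
    using card_norm_trace_fibre_0[OF norm_in_subF] by simp
qed

lemma two_mult_card_Tr_divide_power2:
  assumes "A \<in> Fq" and "A \<noteq> 0"
  shows "2 * card {t\<in>Fq - {0}. Tr (A / t ^ 2) = 1} = q"
proof -
  have "card {t\<in>Fq - {0}. Tr (A / t ^ 2) = 1} = (\<Sum>t\<in>Fq - {0}. if Tr (A / t ^ 2) = 1 then 1 else 0)"
    by (simp add: sum.inter_filter[symmetric])
  also have "\<dots> = (\<Sum>s\<in>Fq - {0}. if Tr s = 1 then 1 else 0)"
    by (rule sum.reindex_bij_betw[OF bij_betw_divide_power2[OF assms]])
  also have "\<dots> = card {s\<in>Fq - {0}. Tr s = 1}"
    by (simp add: sum.inter_filter[symmetric])
  also have "{s\<in>Fq - {0}. Tr s = 1} = {s\<in>Fq. Tr s = 1}"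
    by auto
  finally show ?thesis
    using card_Tr_eq_1 by simp
qed

lemma card_norm_trace_fibre:
  assumes "c \<noteq> 0" and "t \<in> Fq" and "t \<noteq> 0"
  shows "int (card (norm_trace_fibre (c * bar c) t)) = 1 - sgn1 (Tr (c * bar c / t ^ 2))"
proof -
  let ?A = "c * bar c"
  let ?P = "{t\<in>Fq - {0}. norm_trace_fibre ?A t \<noteq> {}}"
  let ?Q = "{t\<in>Fq - {0}. Tr (?A / t ^ 2) = 1}"
  have "?P \<subseteq> ?Q"
    using card_norm_trace_fibre_nonzero(2) by (auto simp: norm_trace_fibre_def)
  moreover have "card ?P = card ?Q"
    using two_mult_card_traces_of_norm_fibre[OF assms(1)]
      two_mult_card_Tr_divide_power2[OF norm_in_subF[of c]] assms(1) by simp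
  ultimately have P_eq_Q: "?P = ?Q"
    by (intro card_subset_eq) simp_all
  show ?thesis
  proof (cases "norm_trace_fibre ?A t = {}")
    case True
    hence "Tr (?A / t ^ 2) \<noteq> 1"
      using P_eq_Q assms by blast
    hence "Tr (?A / t ^ 2) = 0"
      using Tr_subF[of "?A / t ^ 2"] assms(2) by (simp add: norm_in_subF subF_divide subF_power)
    thus ?thesis
      using True by (simp add: sgn1_def)
  next
    case False
    then obtain u where "u * bar u = ?A" and "u + bar u = t"
      by (auto simp: norm_trace_fibre_def)
    thus ?thesis
      using card_norm_trace_fibre_nonzero[of u ?A t] assms(3) by (simp add: sgn1_def)
  qed
qed

lemma kloosterman_eq_sum_power2:
  assumes "A \<in> Fq"
  shows "kloosterman n A = 1 + (\<Sum>t\<in>Fq - {0}. sgn1 (Tr (t ^ 2 + A / t ^ 2)))"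
proof -
  have "kloosterman n A = sgn1 (Tr (inverse 0 + A * 0)) + (\<Sum>x\<in>Fq - {0}. sgn1 (Tr (inverse x + A * x)))"
    unfolding kloosterman_def Tr_def[symmetric] by (rule sum.remove) (simp_all add: subF_0)
  also have "(\<Sum>x\<in>Fq - {0}. sgn1 (Tr (inverse x + A * x)))
      = (\<Sum>t\<in>Fq - {0}. sgn1 (Tr (inverse (1 / t ^ 2) + A * (1 / t ^ 2))))"
    by (rule sum.reindex_bij_betw[OF bij_betw_divide_power2[OF subF_1], symmetric]) simp
  finally show ?thesis
    by (simp add: sgn1_def field_simps)
qed

lemma sum_sgn1_tr_mult_unitU:
  assumes "c \<noteq> 0"
  shows "(\<Sum>\<eta>\<in>U. sgn1 (tr 1 (2 * n) (c * \<eta>))) = 1 - kloosterman n (c * bar c)"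
proof -
  let ?A = "c * bar c"
  have "(\<Sum>\<eta>\<in>U. sgn1 (tr 1 (2 * n) (c * \<eta>))) = (\<Sum>u\<in>(\<lambda>\<eta>. c * \<eta>) ` U. sgn1 (Tr (u + bar u)))"
    unfolding tr_1_2n_eq using assms by (simp add: sum.reindex inj_on_def)
  also have "(\<lambda>\<eta>. c * \<eta>) ` U = {u. u * bar u = ?A}"
    by (rule image_mult_unitU[OF assms])
  also have "(\<Sum>u | u * bar u = ?A. sgn1 (Tr (u + bar u)))
      = (\<Sum>t\<in>Fq. int (card (norm_trace_fibre ?A t)) * sgn1 (Tr t))"
    using sum_group_trace[of "\<lambda>x. sgn1 (Tr x)" "{u. u * bar u = ?A}"]
    by (simp add: norm_trace_fibre_def)
  also have "\<dots> = 1 + (\<Sum>t\<in>Fq - {0}. (1 - sgn1 (Tr (?A / t ^ 2))) * sgn1 (Tr t))"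
    by (simp add: sum.remove[OF _ subF_0] card_norm_trace_fibre_0 norm_in_subF card_norm_trace_fibre assms)
  also have "(\<Sum>t\<in>Fq - {0}. (1 - sgn1 (Tr (?A / t ^ 2))) * sgn1 (Tr t))
      = (\<Sum>t\<in>Fq - {0}. sgn1 (Tr t)) - (\<Sum>t\<in>Fq - {0}. sgn1 (Tr (t ^ 2 + ?A / t ^ 2)))"
    unfolding sum_subtractf[symmetric]
  proof (rule sum.cong[OF refl])
    fix t assume t: "t \<in> Fq - {0}"
    hence "sgn1 (Tr (t ^ 2 + ?A / t ^ 2)) = sgn1 (Tr t) * sgn1 (Tr (?A / t ^ 2))"
      by (simp add: sgn1_Tr_add subF_power subF_divide norm_in_subF Tr_power2_subF)
    thus "(1 - sgn1 (Tr (?A / t ^ 2))) * sgn1 (Tr t) = sgn1 (Tr t) - sgn1 (Tr (t ^ 2 + ?A / t ^ 2))"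
      by (simp add: algebra_simps)
  qed
  also have "(\<Sum>t\<in>Fq - {0}. sgn1 (Tr t)) = -1"
    using sum_sgn1_Tr sum.remove[OF _ subF_0, of "\<lambda>t. sgn1 (Tr t)"] by (simp add: sgn1_def)
  finally show ?thesis
    by (simp add: kloosterman_eq_sum_power2 norm_in_subF)
qed

section \<open>The case b not in U\<close>

lemma moebius_denominators_nonzero:
  assumes "b \<notin> U" and "l \<in> U"
  shows "l + b \<noteq> 0" and "1 + bar b * l \<noteq> 0"
proof -
  show "l + b \<noteq> 0"
    using assms by (auto simp: add_eq_0_iff_eq)
  show "1 + bar b * l \<noteq> 0"
  proof
    assume "1 + bar b * l = 0"
    hence "(bar b * l) * bar (bar b * l) = 1"
      by (simp add: add_eq_0_iff_eq)
    hence "(b * bar b) * (l * bar l) = 1"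
      by (simp add: mult_ac)
    thus False
      using assms by (simp add: unitU_iff)
  qed
qed

lemma moebius_in_unitU:
  assumes "b \<notin> U" and "l \<in> U"
  shows "(1 + bar b * l) / (l + b) \<in> U"
proof -
  have "l \<noteq> 0"
    using assms(2) by (rule unitU_nonzero)
  have "bar ((1 + bar b * l) / (l + b)) = (1 + b * inverse l) / (inverse l + bar b)"
    using assms(2) by (simp add: bar_unitU)
  also have "\<dots> = ((l + b) / l) / ((1 + bar b * l) / l)"
    using \<open>l \<noteq> 0\<close> by (simp add: field_simps)
  also have "\<dots> = (l + b) / (1 + bar b * l)"
    using \<open>l \<noteq> 0\<close> by simp
  finally show ?thesis
    using moebius_denominators_nonzero[OF assms] by (simp add: unitU_iff)
qed

lemma moebius_add_bar:
  assumes "b \<notin> U" and "l \<in> U"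
  shows "(1 + bar b * l) / (l + b) + bar b = (1 + b * bar b) / (l + b)"
  using moebius_denominators_nonzero(1)[OF assms] by (simp add: field_simps)

lemma bij_betw_moebius_unitU:
  assumes "b \<notin> U"
  shows "bij_betw (\<lambda>l. (1 + bar b * l) / (l + b)) U U"
proof -
  have "inj_on (\<lambda>l. (1 + bar b * l) / (l + b)) U"
  proof (rule inj_onI)
    fix l m assume l: "l \<in> U" and m: "m \<in> U"
    assume "(1 + bar b * l) / (l + b) = (1 + bar b * m) / (m + b)"
    hence "(1 + bar b * l) * (m + b) = (1 + bar b * m) * (l + b)"
      using moebius_denominators_nonzero(1)[OF assms l] moebius_denominators_nonzero(1)[OF assms m]
      by (simp add: frac_eq_eq)
    hence "(1 + bar b * l) * (m + b) + (1 + bar b * m) * (l + b) = 0"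
      by (simp only: add_eq_0_iff_eq)
    moreover have "(1 + bar b * l) * (m + b) + (1 + bar b * m) * (l + b) = (l + m) * (1 + b * bar b)"
      by (simp add: algebra_simps)
    moreover have "1 + b * bar b \<noteq> 0"
      using assms by (auto simp: unitU_iff add_eq_0_iff_eq)
    ultimately show "l = m"
      by (auto simp: add_eq_0_iff_eq)
  qed
  thus ?thesis
    using moebius_in_unitU[OF assms] by (intro bij_betw_imageI endo_inj_surj) auto
qed

lemma xi_not_unitU:
  assumes "a \<noteq> 0" and "b \<notin> U"
  shows "xi n a b = (1 - kloosterman n (a * bar a / (1 + b ^ 2 * bar b ^ 2)))
    * sgn1 (tr 1 (2 * n) (bar a * b / (1 + b * bar b)))"
proof -
  define N where "N = 1 + b * bar b"
  define c where "c = a / N"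
  have "N \<noteq> 0"
    using assms(2) by (auto simp: N_def unitU_iff add_eq_0_iff_eq)
  hence "c \<noteq> 0"
    using assms(1) by (simp add: c_def)
  have bar_N: "bar N = N"
    by (simp add: N_def mult.commute)
  have moebius: "a / (l + b) = c * ((1 + bar b * l) / (l + b)) + c * bar b" if "l \<in> U" for l
  proof -
    have "c * ((1 + bar b * l) / (l + b)) + c * bar b = a / N * (N / (l + b))"
      by (simp only: c_def N_def moebius_add_bar[OF assms(2) that] flip: distrib_left)
    also have "\<dots> = a / (l + b)"
      using \<open>N \<noteq> 0\<close> by simp
    finally show ?thesis
      by (rule sym)
  qed
  have "xi n a b = (\<Sum>l\<in>U. sgn1 (tr 1 (2 * n) (c * ((1 + bar b * l) / (l + b)) + c * bar b)))"
    unfolding xi_def by (intro sum.cong refl) (simp add: moebius)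
  also have "\<dots> = (\<Sum>\<eta>\<in>U. sgn1 (tr 1 (2 * n) (c * \<eta> + c * bar b)))"
    by (rule sum.reindex_bij_betw[OF bij_betw_moebius_unitU[OF assms(2)]])
  also have "\<dots> = (\<Sum>\<eta>\<in>U. sgn1 (tr 1 (2 * n) (c * \<eta>))) * sgn1 (tr 1 (2 * n) (c * bar b))"
    unfolding sum_distrib_right by (rule sum.cong[OF refl sgn1_tr_1_2n_add])
  also have "(\<Sum>\<eta>\<in>U. sgn1 (tr 1 (2 * n) (c * \<eta>))) = 1 - kloosterman n (c * bar c)"
    by (rule sum_sgn1_tr_mult_unitU[OF \<open>c \<noteq> 0\<close>])
  also have "c * bar c = a * bar a / (1 + b ^ 2 * bar b ^ 2)"
  proof -
    have "N * N = 1 + b ^ 2 * bar b ^ 2"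
      using power_two_power_add_CHAR_2[OF CHAR_eq_2, of 1 "b * bar b" 1]
      by (simp add: N_def power2_eq_square mult_ac)
    thus ?thesis
      by (simp add: c_def bar_N)
  qed
  also have "tr 1 (2 * n) (c * bar b) = tr 1 (2 * n) (bar a * b / (1 + b * bar b))"
    by (subst tr_1_2n_bar[symmetric]) (simp add: c_def bar_N N_def mult.commute)
  finally show ?thesis .
qed

end

theorem lemma5:
  fixes a b :: "'a::{field,finite}" and n :: nat
  assumes card: "card (UNIV :: 'a set) = 2 ^ (2 * n)"
    and a0: "a \<noteq> 0" and b0: "b \<noteq> 0"
  shows "xi n a b =
    (if b \<in> unitU n \<and> tr n (2 * n) (a * conj2 n b) = 0
       then 1 + sgn1 (tr 1 n (a * conj2 n a)) * 2 ^ n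
     else if b \<in> unitU n
       then 1
     else (1 - kloosterman n (a * conj2 n a / (1 + b ^ 2 * (conj2 n b) ^ 2)))
          * sgn1 (tr 1 (2 * n) (conj2 n a * b / (1 + b * conj2 n b))))"
proof -
  interpret gf_q_square n "TYPE('a)"
    by unfold_locales (rule card)
  show ?thesis
  proof (cases "b \<in> U")
    case True
    thus ?thesis
      using xi_unitU[OF True, of a] by (simp add: Tr_def)
  next
    case False
    thus ?thesis
      using xi_not_unitU[OF a0 False] by simp
  qed
qed

end
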